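(* Let $\mathbb{C}$ be a category of interest and $A\in\mathbb{C}$. The map $d:A\to\mathfrak{B}(A)$, $a\mapsto d(a)$ where $d(a)\cdot a'=a+a'-a$ and $d(a)*a'=a*a'$ for all $a'\in A$, $*\in\Omega_2'$, is a homomorphism in $\mathbb{C}_G$.
   Context: Category of interest. A category of groups with operations is a variety of universal algebras with a set of operations $\Omega=\Omega_0\cup\Omega_1\cup\Omega_2$ ($\Omega_i$ = set of $i$-ary operations) and a set of identities $\mathbb{E}$ such that: $\mathbb{E}$ contains the group laws; the group operations, written additively $0,-,+$ (addition not necessarily commutative), lie in $\Omega_0,\Omega_1,\Omega_2$ respectively, and $\Omega_0=\{0\}$; putting $\Omega_2'=\Omega_2\setminus\{+\}$ and $\Omega_1'=\Omega_1\setminus\{-\}$, whenever $*\in\Omega_2'$ also $*^\circ\in\Omega_2'$, where $x*^\circ y=y*x$; $\mathbb{E}$ contains $x*(y+z)=x*y+x*z$ for each $*\in\Omega_2'$, and $\omega(x+y)=\omega(x)+\omega(y)$, $\omega(x)*y=\omega(x*y)$ for each $\omega\in\Omega_1'$, $*\in\Omega_2'$. A category of interest $\mathbb{C}=(\Omega,\mathbb{E})$ is such a variety which also satisfies: (Axiom 1) $x_1+(x_2*x_3)=(x_2*x_3)+x_1$ for each $*\in\Omega_2'$; (Axiom 2) for each ordered pair $( *,\bar* )\in\Omega_2'\times\Omega_2'$ there is a word $W$ with $(x_1*x_2)\bar*x_3=W\big(x_1(x_2x_3),x_1(x_3x_2),(x_2x_3)x_1,(x_3x_2)x_1,x_2(x_1x_3),x_2(x_3x_1),(x_1x_3)x_2,(x_3x_1)x_2\big)$,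 each juxtaposition standing for some operation in $\Omega_2'$; the right-hand side is denoted $W(x_1,x_2;x_3;*,\bar* )$. Let $\mathbb{E}_G\subseteq\mathbb{E}$ consist of the group laws together with the identities $x*(y+z)=x*y+x*z$, $\omega(x+y)=\omega(x)+\omega(y)$, $\omega(x)*y=\omega(x*y)$, and let $\mathbb{C}_G$ be the variety $(\Omega,\mathbb{E}_G)$. Derived actions. For objects $A,B$ of $\mathbb{C}$, a split extension $0\to A\to E\xrightarrow{p}B\to 0$ in $\mathbb{C}$ ($p$ surjective with kernel $A$, and a morphism $s$ with $ps=1_B$) induces actions $b\cdot a=s(b)+a-s(b)$ and $b*a=s(b)*a$ ($*\in\Omega_2'$); these are the derived actions of $B$ on $A$ in $\mathbb{C}$ (one writes $a*b:=b*^\circ a$). The object $\mathfrak{B}(A)$. Fix $A\in\mathbb{C}$ and let $(B_j)_{j\in J}$ range over all objects of $\mathbb{C}$ equipped with a derived action on $A$ in $\mathbb{C}$ (one index for each split extension of $A$ in $\mathbb{C}$; note $A$ itself acts on $A$ by $a\cdot a'=a+a'-a$, $a*a'=a*a'$). Consider families $x$ of maps $A\to A$ consisting of a map $a\mapsto x\cdot a$ and maps $a\mapsto x*a$ ($*\in\Omega_2'$). For $b\in B_j$ let $\mathbf{b}$ be the family $a\mapsto b\cdot a$, $a\mapsto b*a$, and let $\mathbb{B}$ be the set of all such $\mathbf b$. Operations on families: for $\mathbf{b}_i,\mathbf{b}_k\in\mathbb{B}$ and $*\in\Omega_2'$, $(\mathbf b_i*\mathbf b_k)\cdot a=a$ and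 $(\mathbf b_i*\mathbf b_k)\bar*a=W(b_i,b_k;a;*,\bar* )$ for $\bar*\in\Omega_2'$ (the Axiom 2 word evaluated through the given actions), iterated products being defined inductively in the same way via Axiom 2; $(x+y)\cdot a=x\cdot(y\cdot a)$ and $(x+y)*a=x*a+y*a$; for $\omega\in\Omega_1'$, $\omega(\mathbf b_k)$ is the family of $\omega(b_k)$, $\omega(x*y)=\omega(x)*y$, and $\omega$ is additive; $(-\mathbf b_k)\cdot a=(-b_k)\cdot a$, $(-x)*a=-(x*a)$, $(-x)\cdot a=a$ when $x$ is a product, and $-(x_1+\dots+x_n)=-x_n-\dots-x_1$. $\mathfrak{B}(A)$ is the set of all families obtained from $\mathbb{B}$ by iterating these operations, modulo the equivalence $x\sim y$ iff $x\cdot a=y\cdot a$, $x*a=y*a$ and $(\omega_1\cdots\omega_n x)\cdot a=(\omega_1\cdots\omega_n y)\cdot a$ for all $a\in A$, $*\in\Omega_2'$, $n\ge1$, $\omega_1,\dots,\omega_n\in\Omega_1'$. It is an object of $\mathbb{C}_G$. *)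

theory Defs
  imports Main
begin

text \<open>
  Signature of a category of interest, rendered concretely:
  the group operations are those of a (not necessarily commutative) group
  \<open>'a :: group_add\<close>; the set \<open>\<Omega>2'\<close> is a set \<open>O2\<close> of labels of type \<open>'b\<close>
  interpreted by \<open>mul\<close>, the set \<open>\<Omega>1'\<close> is a set \<open>O1\<close> of labels of type \<open>'c\<close>
  interpreted by \<open>uop\<close>; \<open>opp s\<close> is the label of the opposite operation \<open>s\<degree>\<close>.
\<close>

datatype 'v gword = GVar 'v | GZero | GNeg "'v gword" | GAdd "'v gword" "'v gword"

primrec gword_eval :: "('v \<Rightarrow> 'a::group_add) \<Rightarrow> 'v gword \<Rightarrow> 'a" where
  "gword_eval f (GVar v) = f v"
| "gword_eval f GZero = 0"
| "gword_eval f (GNeg w) = - gword_eval f w"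
| "gword_eval f (GAdd v w) = gword_eval f v + gword_eval f w"

(* the eight shapes of letters allowed in the Axiom 2 word, in the order
   x1(x2x3), x1(x3x2), (x2x3)x1, (x3x2)x1, x2(x1x3), x2(x3x1), (x1x3)x2, (x3x1)x2 *)
datatype shape = S1 | S2 | S3 | S4 | S5 | S6 | S7 | S8

(* Lt sh o1 o2 : letter of shape sh with outer operation o1 and inner operation o2 *)
datatype 'b letter = Lt shape 'b 'b

fun letter_ops :: "'b letter \<Rightarrow> 'b set" where
  "letter_ops (Lt sh o1 o2) = {o1, o2}"

definition word_ops :: "'b letter gword \<Rightarrow> 'b set" where
  "word_ops w = \<Union> (letter_ops ` {v. v \<in> set_gword w})"

fun letter_eval_A :: "('b \<Rightarrow> 'a \<Rightarrow> 'a \<Rightarrow> 'a) \<Rightarrow> 'a \<Rightarrow> 'a \<Rightarrow> 'a \<Rightarrow> 'b letter \<Rightarrow> 'a" where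
  "letter_eval_A mul x1 x2 x3 (Lt S1 o1 o2) = mul o1 x1 (mul o2 x2 x3)"
| "letter_eval_A mul x1 x2 x3 (Lt S2 o1 o2) = mul o1 x1 (mul o2 x3 x2)"
| "letter_eval_A mul x1 x2 x3 (Lt S3 o1 o2) = mul o1 (mul o2 x2 x3) x1"
| "letter_eval_A mul x1 x2 x3 (Lt S4 o1 o2) = mul o1 (mul o2 x3 x2) x1"
| "letter_eval_A mul x1 x2 x3 (Lt S5 o1 o2) = mul o1 x2 (mul o2 x1 x3)"
| "letter_eval_A mul x1 x2 x3 (Lt S6 o1 o2) = mul o1 x2 (mul o2 x3 x1)"
| "letter_eval_A mul x1 x2 x3 (Lt S7 o1 o2) = mul o1 (mul o2 x1 x3) x2"
| "letter_eval_A mul x1 x2 x3 (Lt S8 o1 o2) = mul o1 (mul o2 x3 x1) x2"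

definition W_eval_A :: "('b \<Rightarrow> 'a::group_add \<Rightarrow> 'a \<Rightarrow> 'a) \<Rightarrow> 'b letter gword
     \<Rightarrow> 'a \<Rightarrow> 'a \<Rightarrow> 'a \<Rightarrow> 'a" where
  "W_eval_A mul w x1 x2 x3 = gword_eval (letter_eval_A mul x1 x2 x3) w"

(* evaluation of a letter W(b_i,b_k;a) through actions: f1, f2 are the
   star-actions of the two acting families (f o a = "x o a"), and
   "a o x" is written "x o\<degree> a" as in the paper *)
fun letter_eval_act :: "('b \<Rightarrow> 'b) \<Rightarrow> ('b \<Rightarrow> 'a \<Rightarrow> 'a) \<Rightarrow> ('b \<Rightarrow> 'a \<Rightarrow> 'a) \<Rightarrow> 'a
     \<Rightarrow> 'b letter \<Rightarrow> 'a" where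
  "letter_eval_act opp f1 f2 a (Lt S1 o1 o2) = f1 o1 (f2 o2 a)"
| "letter_eval_act opp f1 f2 a (Lt S2 o1 o2) = f1 o1 (f2 (opp o2) a)"
| "letter_eval_act opp f1 f2 a (Lt S3 o1 o2) = f1 (opp o1) (f2 o2 a)"
| "letter_eval_act opp f1 f2 a (Lt S4 o1 o2) = f1 (opp o1) (f2 (opp o2) a)"
| "letter_eval_act opp f1 f2 a (Lt S5 o1 o2) = f2 o1 (f1 o2 a)"
| "letter_eval_act opp f1 f2 a (Lt S6 o1 o2) = f2 o1 (f1 (opp o2) a)"
| "letter_eval_act opp f1 f2 a (Lt S7 o1 o2) = f2 (opp o1) (f1 o2 a)"
| "letter_eval_act opp f1 f2 a (Lt S8 o1 o2) = f2 (opp o1) (f1 (opp o2) a)"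

definition W_eval_act :: "('b \<Rightarrow> 'b) \<Rightarrow> 'b letter gword \<Rightarrow> ('b \<Rightarrow> 'a::group_add \<Rightarrow> 'a)
     \<Rightarrow> ('b \<Rightarrow> 'a \<Rightarrow> 'a) \<Rightarrow> 'a \<Rightarrow> 'a" where
  "W_eval_act opp w f1 f2 a = gword_eval (letter_eval_act opp f1 f2 a) w"

text \<open>The algebra \<open>'a\<close> (with operations mul, uop) is an object of the category of
  interest with Axiom-2 words \<open>W s s'\<close> (for \<open>(x1 s x2) s' x3\<close>).\<close>
definition cat_interest_obj ::
  "'b set \<Rightarrow> 'c set \<Rightarrow> ('b \<Rightarrow> 'b) \<Rightarrow> ('b \<Rightarrow> 'a::group_add \<Rightarrow> 'a \<Rightarrow> 'a)
   \<Rightarrow> ('c \<Rightarrow> 'a \<Rightarrow> 'a) \<Rightarrow> ('b \<Rightarrow> 'b \<Rightarrow> 'b letter gword) \<Rightarrow> bool" where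
  "cat_interest_obj O2 O1 opp mul uop W \<longleftrightarrow>
     (\<forall>s\<in>O2. opp s \<in> O2 \<and> (\<forall>x y. mul (opp s) x y = mul s y x)) \<and>
     (\<forall>s\<in>O2. \<forall>x y z. mul s x (y + z) = mul s x y + mul s x z) \<and>
     (\<forall>w\<in>O1. \<forall>x y. uop w (x + y) = uop w x + uop w y) \<and>
     (\<forall>w\<in>O1. \<forall>s\<in>O2. \<forall>x y. mul s (uop w x) y = uop w (mul s x y)) \<and>
     (\<forall>s\<in>O2. \<forall>x1 x2 x3. x1 + mul s x2 x3 = mul s x2 x3 + x1) \<and>
     (\<forall>s\<in>O2. \<forall>s'\<in>O2. word_ops (W s s') \<subseteq> O2 \<and>
        (\<forall>x1 x2 x3. mul s' (mul s x1 x2) x3 = W_eval_A mul (W s s') x1 x2 x3))"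

text \<open>Formal elements of \<open>\<BB>(A)\<close> generated by the families \<open>d(b)\<close>, \<open>b \<in> A\<close>
  (A acting on itself).  \<open>BNProd\<close> is the negative of a product.\<close>
datatype ('a, 'b) bexp =
    Gen 'a
  | BSum "('a, 'b) bexp" "('a, 'b) bexp"
  | BProd 'b "('a, 'b) bexp" "('a, 'b) bexp"
  | BNProd 'b "('a, 'b) bexp" "('a, 'b) bexp"

primrec bdot :: "('a::group_add, 'b) bexp \<Rightarrow> 'a \<Rightarrow> 'a" where
  "bdot (Gen b) a = b + a - b"
| "bdot (BSum x y) a = bdot x (bdot y a)"
| "bdot (BProd s x y) a = a"
| "bdot (BNProd s x y) a = a"

primrec bstar :: "('b \<Rightarrow> 'b) \<Rightarrow> ('b \<Rightarrow> 'a::group_add \<Rightarrow> 'a \<Rightarrow> 'a) \<Rightarrow> ('b \<Rightarrow> 'b \<Rightarrow> 'b letter gword)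
   \<Rightarrow> ('a, 'b) bexp \<Rightarrow> 'b \<Rightarrow> 'a \<Rightarrow> 'a" where
  "bstar opp mul W (Gen b) s' a = mul s' b a"
| "bstar opp mul W (BSum x y) s' a = bstar opp mul W x s' a + bstar opp mul W y s' a"
| "bstar opp mul W (BProd s x y) s' a =
     W_eval_act opp (W s s') (bstar opp mul W x) (bstar opp mul W y) a"
| "bstar opp mul W (BNProd s x y) s' a =
     - W_eval_act opp (W s s') (bstar opp mul W x) (bstar opp mul W y) a"

definition bplus :: "('a, 'b) bexp \<Rightarrow> ('a, 'b) bexp \<Rightarrow> ('a, 'b) bexp" where
  "bplus x y = BSum x y"

definition bmul :: "'b \<Rightarrow> ('a, 'b) bexp \<Rightarrow> ('a, 'b) bexp \<Rightarrow> ('a, 'b) bexp" where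
  "bmul s x y = BProd s x y"

primrec bneg :: "('a::group_add, 'b) bexp \<Rightarrow> ('a, 'b) bexp" where
  "bneg (Gen b) = Gen (- b)"
| "bneg (BSum x y) = BSum (bneg y) (bneg x)"
| "bneg (BProd s x y) = BNProd s x y"
| "bneg (BNProd s x y) = BProd s x y"

primrec bomega :: "('c \<Rightarrow> 'a \<Rightarrow> 'a) \<Rightarrow> 'c \<Rightarrow> ('a, 'b) bexp \<Rightarrow> ('a, 'b) bexp" where
  "bomega uop w (Gen b) = Gen (uop w b)"
| "bomega uop w (BSum x y) = BSum (bomega uop w x) (bomega uop w y)"
| "bomega uop w (BProd s x y) = BProd s (bomega uop w x) y"
| "bomega uop w (BNProd s x y) = BNProd s (bomega uop w x) y"

(* the equivalence defining equality in \<BB>(A) *)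
definition bequiv :: "'b set \<Rightarrow> 'c set \<Rightarrow> ('b \<Rightarrow> 'b) \<Rightarrow> ('b \<Rightarrow> 'a::group_add \<Rightarrow> 'a \<Rightarrow> 'a)
   \<Rightarrow> ('c \<Rightarrow> 'a \<Rightarrow> 'a) \<Rightarrow> ('b \<Rightarrow> 'b \<Rightarrow> 'b letter gword)
   \<Rightarrow> ('a, 'b) bexp \<Rightarrow> ('a, 'b) bexp \<Rightarrow> bool" where
  "bequiv O2 O1 opp mul uop W x y \<longleftrightarrow>
     (\<forall>a. bdot x a = bdot y a) \<and>
     (\<forall>s\<in>O2. \<forall>a. bstar opp mul W x s a = bstar opp mul W y s a) \<and>
     (\<forall>ws. ws \<noteq> [] \<and> set ws \<subseteq> O1 \<longrightarrow>
        (\<forall>a. bdot (foldr (bomega uop) ws x) a = bdot (foldr (bomega uop) ws y) a))"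

definition dmap :: "'a \<Rightarrow> ('a, 'b) bexp" where
  "dmap a = Gen a"

end

theory Submission
  imports Defs
begin

text \<open>
  For sums, the dot-actions agree since conjugation by a sum is the composite of conjugations,
  and the star-actions agree by two-sided distributivity. For products, both dot-actions are
  trivial because products are central (Axiom 1), and the star-actions agree because
  evaluating the Axiom 2 word through the actions of \<open>A\<close> on itself is just Axiom 2 in \<open>A\<close>,
  once each \<open>x *\<degree> a\<close> is read back as \<open>a * x\<close>.
  The unary operations commute with addition and pass into the left factor of products,
  so iterating them preserves both arguments. Negation and the unary operations are
  respected on the nose.
\<close>

lemma gword_eval_cong:
  "(\<And>v. v \<in> set_gword w \<Longrightarrow> f v = g v) \<Longrightarrow> gword_eval f w = gword_eval g w"
  by (induction w) auto

lemma foldr_bomega_Gen: "foldr (bomega uop) ws (Gen c) = Gen (foldr uop ws c)"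
  by (induction ws) auto

lemma foldr_bomega_BSum:
  "foldr (bomega uop) ws (BSum x y) = BSum (foldr (bomega uop) ws x) (foldr (bomega uop) ws y)"
  by (induction ws) auto

lemma foldr_bomega_BProd: "foldr (bomega uop) ws (BProd s x y) = BProd s (foldr (bomega uop) ws x) y"
  by (induction ws) auto

lemma bstar_Gen: "bstar opp mul W (Gen c) = (\<lambda>s. mul s c)"
  by (intro ext) simp

lemma bequiv_refl: "bequiv O2 O1 opp mul uop W x x"
  by (simp add: bequiv_def)

locale category_of_interest =
  fixes O2 :: "'b set" and O1 :: "'c set" and opp :: "'b \<Rightarrow> 'b"
    and mul :: "'b \<Rightarrow> 'a::group_add \<Rightarrow> 'a \<Rightarrow> 'a" and uop :: "'c \<Rightarrow> 'a \<Rightarrow> 'a"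
    and W :: "'b \<Rightarrow> 'b \<Rightarrow> 'b letter gword"
  assumes opp_closed: "s \<in> O2 \<Longrightarrow> opp s \<in> O2"
    and mul_opp: "s \<in> O2 \<Longrightarrow> mul (opp s) x y = mul s y x"
    and mul_add_right: "s \<in> O2 \<Longrightarrow> mul s x (y + z) = mul s x y + mul s x z"
    and uop_add: "w \<in> O1 \<Longrightarrow> uop w (x + y) = uop w x + uop w y"
    and mul_uop_left: "w \<in> O1 \<Longrightarrow> s \<in> O2 \<Longrightarrow> mul s (uop w x) y = uop w (mul s x y)"
    and mul_central: "s \<in> O2 \<Longrightarrow> x1 + mul s x2 x3 = mul s x2 x3 + x1"
    and word_ops_W: "s \<in> O2 \<Longrightarrow> s' \<in> O2 \<Longrightarrow> word_ops (W s s') \<subseteq> O2"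
    and mul_mul_W: "s \<in> O2 \<Longrightarrow> s' \<in> O2 \<Longrightarrow> mul s' (mul s x1 x2) x3 = W_eval_A mul (W s s') x1 x2 x3"

lemma category_of_interestI:
  "cat_interest_obj O2 O1 opp mul uop W \<Longrightarrow> category_of_interest O2 O1 opp mul uop W"
  unfolding cat_interest_obj_def by unfold_locales meson+

context category_of_interest
begin

lemma mul_add_left:
  assumes "s \<in> O2"
  shows "mul s (x + y) z = mul s x z + mul s y z"
proof -
  have "mul s (x + y) z = mul (opp s) z (x + y)" using assms by (simp add: mul_opp)
  also have "\<dots> = mul s x z + mul s y z" using assms by (simp add: mul_add_right opp_closed mul_opp)
  finally show ?thesis .
qed

lemma foldr_uop_add: "set ws \<subseteq> O1 \<Longrightarrow> foldr uop ws (x + y) = foldr uop ws x + foldr uop ws y"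
  by (induction ws) (auto simp: uop_add)

lemma foldr_uop_mul: "set ws \<subseteq> O1 \<Longrightarrow> s \<in> O2 \<Longrightarrow> foldr uop ws (mul s x y) = mul s (foldr uop ws x) y"
  by (induction ws) (auto simp: mul_uop_left)

lemma bdot_Gen_mul: "s \<in> O2 \<Longrightarrow> bdot (Gen (mul s x y)) a = a"
  by (metis bdot.simps(1) add_diff_cancel mul_central)

lemma letter_eval_A_eq_act:
  assumes "letter_ops l \<subseteq> O2"
  shows "letter_eval_A mul x1 x2 a l = letter_eval_act opp (\<lambda>s. mul s x1) (\<lambda>s. mul s x2) a l"
proof (cases l)
  case (Lt sh o1 o2)
  with assms show ?thesis by (cases sh) (auto simp: mul_opp)
qed

lemma W_eval_A_eq_act:
  assumes "word_ops w \<subseteq> O2"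
  shows "W_eval_A mul w x1 x2 a = W_eval_act opp w (\<lambda>s. mul s x1) (\<lambda>s. mul s x2) a"
  unfolding W_eval_A_def W_eval_act_def
proof (rule gword_eval_cong)
  fix l assume "l \<in> set_gword w"
  with assms have "letter_ops l \<subseteq> O2" by (auto simp: word_ops_def)
  then show "letter_eval_A mul x1 x2 a l = letter_eval_act opp (\<lambda>s. mul s x1) (\<lambda>s. mul s x2) a l"
    by (rule letter_eval_A_eq_act)
qed

lemma bequiv_dmap_add: "bequiv O2 O1 opp mul uop W (dmap (x + y)) (bplus (dmap x) (dmap y))"
  unfolding bequiv_def dmap_def bplus_def
  by (auto simp: foldr_bomega_Gen foldr_bomega_BSum foldr_uop_add mul_add_left algebra_simps)

lemma bequiv_dmap_mul:
  assumes "s \<in> O2"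
  shows "bequiv O2 O1 opp mul uop W (dmap (mul s x y)) (bmul s (dmap x) (dmap y))"
proof -
  have "bstar opp mul W (Gen (mul s x y)) s' a = bstar opp mul W (BProd s (Gen x) (Gen y)) s' a"
    if "s' \<in> O2" for s' a
    using assms that by (simp add: bstar_Gen mul_mul_W W_eval_A_eq_act word_ops_W)
  with assms show ?thesis
    unfolding bequiv_def dmap_def bmul_def
    by (auto simp: foldr_bomega_Gen foldr_bomega_BProd foldr_uop_mul bdot_Gen_mul simp del: bdot.simps(1))
qed

end

theorem lemma3p3:
  fixes O2 :: "'b set" and O1 :: "'c set" and opp :: "'b \<Rightarrow> 'b"
    and mul :: "'b \<Rightarrow> 'a::group_add \<Rightarrow> 'a \<Rightarrow> 'a" and uop :: "'c \<Rightarrow> 'a \<Rightarrow> 'a"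
    and W :: "'b \<Rightarrow> 'b \<Rightarrow> 'b letter gword"
  assumes "cat_interest_obj O2 O1 opp mul uop W"
  shows "(\<forall>a b. bequiv O2 O1 opp mul uop W (dmap (a + b)) (bplus (dmap a) (dmap b))) \<and>
         (\<forall>a. bequiv O2 O1 opp mul uop W (dmap (- a)) (bneg (dmap a))) \<and>
         (\<forall>s\<in>O2. \<forall>a b. bequiv O2 O1 opp mul uop W (dmap (mul s a b)) (bmul s (dmap a) (dmap b))) \<and>
         (\<forall>w\<in>O1. \<forall>a. bequiv O2 O1 opp mul uop W (dmap (uop w a)) (bomega uop w (dmap a)))"
proof -
  interpret category_of_interest O2 O1 opp mul uop W
    using assms by (rule category_of_interestI)
  have "bneg (dmap a) = dmap (- a)" and "bomega uop w (dmap a) = dmap (uop w a)" for a w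
    by (simp_all add: dmap_def)
  then show ?thesis
    using bequiv_dmap_add bequiv_dmap_mul bequiv_refl by metis
qed

end
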